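(* Suppose $p=2p_1$, $q=2q_1$, $r=2r_1$ are all even, and let $H$ be the quotient of $W(p,q,r)$ by the normal subgroup generated by $\big((s_1s_3)^{q_1}(s_1s_2)^{p_1}(s_2s_3)^{r_1}\big)^2$. Then for every reflection representation $R$ of $W(p,q,r)$ (any admissible parameters) with $\Delta=0$, $R$ factors through $H$; in particular $G=R(W)$ is isomorphic to a quotient of $H$.
   Context: Setting. Let $p,q,r\ge 3$ be integers and $W=W(p,q,r)$ the Coxeter group with generators $s_1,s_2,s_3$ and relations $s_i^2=1$, $(s_1s_2)^p=(s_1s_3)^q=(s_2s_3)^r=1$. Let $\alpha=4\cos^2(\pi k_1/p)$, $\beta=4\cos^2(\pi k_2/q)$, $\gamma=4\cos^2(\pi k_3/r)$ with $\gcd(k_1,p)=\gcd(k_2,q)=\gcd(k_3,r)=1$ (so $0<\alpha,\beta,\gamma<4$), and let $l,m\in\mathbb{C}$ with $lm=\gamma$. Let $K\subset\mathbb{C}$ be a field containing $\alpha,\beta,\gamma,l,m$, and $M$ a $3$-dimensional $K$-vector space with basis $(a_1,a_2,a_3)$. The reflection representation $R:W\to GL(M)$ with parameters $(\alpha,\beta,\gamma;l,m)$ is defined by: for $x=\lambda_1a_1+\lambda_2a_2+\lambda_3a_3$, $R(s_1)x=x-(2\lambda_1-\alpha\lambda_2-\beta\lambda_3)a_1$, $R(s_2)x=x-(-\lambda_1+2\lambda_2-l\lambda_3)a_2$, $R(s_3)x=x-(-\lambda_1-m\lambda_2+2\lambda_3)a_3$. Put $G=R(W)$ and write $s_i$ for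 $R(s_i)$. Let $\Delta=8-2\alpha-2\beta-2\gamma-(\alpha l+\beta m)$; $R$ is reducible iff $\Delta=0$. *)

theory Defs
  imports "HOL-Analysis.Analysis"
begin

text \<open>The reflection representation with parameters (alpha, beta, gamma; l, m) on
  M = K^3 with basis a_1, a_2, a_3, realised on coordinate vectors in complex^3
  (K is a subfield of the complex numbers).\<close>

definition refl_s1 :: "complex \<Rightarrow> complex \<Rightarrow> complex^3 \<Rightarrow> complex^3" where
  "refl_s1 \<alpha> \<beta> x = x - (2 * x$1 - \<alpha> * x$2 - \<beta> * x$3) *s axis 1 1"

definition refl_s2 :: "complex \<Rightarrow> complex^3 \<Rightarrow> complex^3" where
  "refl_s2 l x = x - (- x$1 + 2 * x$2 - l * x$3) *s axis 2 1"

definition refl_s3 :: "complex \<Rightarrow> complex^3 \<Rightarrow> complex^3" where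
  "refl_s3 m x = x - (- x$1 - m * x$2 + 2 * x$3) *s axis 3 1"

definition refl_Delta :: "complex \<Rightarrow> complex \<Rightarrow> complex \<Rightarrow> complex \<Rightarrow> complex \<Rightarrow> complex" where
  "refl_Delta \<alpha> \<beta> \<gamma> l m = 8 - 2*\<alpha> - 2*\<beta> - 2*\<gamma> - (\<alpha> * l + \<beta> * m)"

end

theory Submission
  imports Defs
begin

text \<open>For i \<noteq> j the rotation A = s_i s_j of order p = 2 p_1 satisfies
  (A - 1)(A^2 - t A + 1) = 0 with t = 2 cos \<theta>, where p_1 \<theta> is an odd multiple of pi.
  On the kernel of A^2 - t A + 1 the power A^p_1 is -1 by the Chebyshev recurrence, hence
  A^p_1 = -1 + (2 / (2 - t)) (A^2 - t A + 1): it is a half-turn x \<mapsto> -x + c(x) v about the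
  fixed line v of s_i and s_j. When Delta = 0 the three reflections have a common fixed vector u,
  which then lies on all three axes, so (s1 s3)^q1, (s1 s2)^p1 and (s2 s3)^r1 are half-turns
  about the same axis u. A product of three half-turns about u is again one, and a linear
  half-turn is an involution.\<close>

lemma vec_linear_funpow:
  fixes A :: "'a::field^'n \<Rightarrow> 'a^'n"
  assumes "Vector_Spaces.linear (*s) (*s) A"
  shows "Vector_Spaces.linear (*s) (*s) (A ^^ j)"
proof (induction j)
  case 0
  show ?case by (simp add: vec.linear_ident)
next
  case (Suc j)
  then show ?case
    using Vector_Spaces.linear_compose[OF Suc assms] by (simp only: funpow.simps)
qed

lemma funpow_fixed_point:
  assumes "f z = z"
  shows "(f ^^ n) z = z"
  by (induction n) (simp_all add: assms)

lemma of_real_two_cos_neq_two: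
  assumes "sin \<theta> \<noteq> 0"
  shows "(of_real (2 * cos \<theta>) :: 'a::real_algebra_1) \<noteq> 2"
proof
  assume "(of_real (2 * cos \<theta>) :: 'a) = 2"
  then have "(of_real (2 * cos \<theta>) :: 'a) = of_real 2"
    by simp
  then have "cos \<theta> = 1"
    by (simp only: of_real_eq_iff)
  then show False
    using assms sin_cos_squared_add[of \<theta>] by simp
qed

lemma rotation_angle_of_parameter:
  fixes k :: int and n :: nat and a :: "'a::real_algebra_1"
  assumes n: "n \<ge> 2" and coprime: "gcd k (int (2 * n)) = 1"
    and a: "a = of_real (4 * (cos (pi * k / real (2 * n)))\<^sup>2)"
  obtains \<theta> :: real where "a - 2 = of_real (2 * cos \<theta>)"
    and "sin \<theta> \<noteq> 0" and "cos (n * \<theta>) = -1"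
proof -
  define \<theta> where "\<theta> = pi * k / n"
  have "4 * (cos (pi * k / real (2 * n)))\<^sup>2 - 2 = 2 * cos \<theta>"
    using cos_double_cos[of "pi * k / real (2 * n)"] n by (simp add: \<theta>_def)
  then have half_angle: "a - 2 = of_real (2 * cos \<theta>)"
    unfolding a by (metis of_real_diff of_real_numeral)
  have sin_ne: "sin \<theta> \<noteq> 0"
  proof
    assume "sin \<theta> = 0"
    then obtain i :: int where "pi * k / n = i * pi"
      by (auto simp: \<theta>_def sin_zero_iff_int2)
    then have "k = i * int n"
      using n by (simp add: field_simps) (metis of_int_eq_iff of_int_mult of_int_of_nat_eq)
    then have "int n dvd gcd k (int (2 * n))"
      by (intro gcd_greatest) simp_all
    then have "int n dvd 1"
      by (simp only: coprime)
    then show False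
      using n by simp
  qed
  have "odd k"
  proof
    assume "even k"
    then have "2 dvd gcd k (int (2 * n))"
      by (intro gcd_greatest) simp_all
    then have "(2::int) dvd 1"
      by (simp only: coprime)
    then show False
      by simp
  qed
  then have "cos (n * \<theta>) = -1"
    using n by (simp add: \<theta>_def mult.commute)
  with half_angle sin_ne show thesis
    by (rule that)
qed

text \<open>The Chebyshev recurrence for powers of A on the kernel of A^2 - 2 cos \<theta> A + 1,
  multiplied through by sin \<theta> to avoid division.\<close>

lemma sin_funpow_quadratic:
  fixes A :: "'a::real_field^'n \<Rightarrow> 'a^'n" and \<theta> :: real
  assumes lin: "Vector_Spaces.linear (*s) (*s) A"
    and quad: "A (A y) = of_real (2 * cos \<theta>) *s A y - y"
  shows "of_real (sin \<theta>) *s (A ^^ Suc j) y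
           = of_real (sin (Suc j * \<theta>)) *s A y - of_real (sin (j * \<theta>)) *s y"
proof (induction j)
  case 0
  show ?case by simp
next
  case (Suc j)
  have "sin (Suc (Suc j) * \<theta>) = 2 * cos \<theta> * sin (Suc j * \<theta>) - sin (j * \<theta>)"
    using sin_add[of "Suc j * \<theta>" \<theta>] sin_diff[of "Suc j * \<theta>" \<theta>]
    by (simp add: algebra_simps)
  then have sin_rec: "(of_real (sin (Suc (Suc j) * \<theta>)) :: 'a)
      = of_real (2 * cos \<theta>) * of_real (sin (Suc j * \<theta>)) - of_real (sin (j * \<theta>))"
    by (metis of_real_diff of_real_mult)
  have "of_real (sin \<theta>) *s (A ^^ Suc (Suc j)) y = A (of_real (sin \<theta>) *s (A ^^ Suc j) y)"
    by (simp add: vec.linear_scale[OF lin])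
  also have "\<dots> = of_real (sin (Suc j * \<theta>)) *s A (A y) - of_real (sin (j * \<theta>)) *s A y"
    unfolding Suc by (simp add: vec.linear_diff[OF lin] vec.linear_scale[OF lin])
  also have "\<dots> = of_real (sin (Suc (Suc j) * \<theta>)) *s A y - of_real (sin (Suc j * \<theta>)) *s y"
    unfolding quad sin_rec by (simp add: vec_eq_iff algebra_simps)
  finally show ?case .
qed

lemma funpow_half_period:
  fixes A :: "'a::real_field^'n \<Rightarrow> 'a^'n" and \<theta> :: real
  assumes lin: "Vector_Spaces.linear (*s) (*s) A"
    and fixes_quadratic: "\<And>x. A (A (A x) - t *s A x + x) = A (A x) - t *s A x + x"
    and t: "t = of_real (2 * cos \<theta>)" and sin_ne: "sin \<theta> \<noteq> 0" and cos_eq: "cos (n * \<theta>) = -1"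
  shows "(A ^^ n) x = (2 / (2 - t)) *s (A (A x) - t *s A x + x) - x"
proof -
  define P where "P x = A (A x) - t *s A x + x" for x
  have "t \<noteq> 2"
    unfolding t by (rule of_real_two_cos_neq_two[OF sin_ne])
  then have t_ne: "2 - t \<noteq> 0"
    by simp
  have P_lin: "P (a - c *s b) = P a - c *s P b" for a b c
    by (simp add: P_def vec.linear_diff[OF lin] vec.linear_scale[OF lin] algebra_simps)
  have P_P: "P (P x) = (2 - t) *s P x"
    using fixes_quadratic[of x]
    by (simp add: P_def[of "P x"] flip: P_def) (simp add: vec_eq_iff algebra_simps)
  \<comment> \<open>Split x into a vector on the A-fixed line of P and a vector killed by P.\<close>
  define y where "y = x - (1 / (2 - t)) *s P x"
  have "P y = 0"
    using t_ne by (simp only: y_def P_lin P_P vector_smult_assoc) simp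
  then have y_quadratic: "A (A y) = t *s A y - y"
    by (simp add: P_def algebra_simps eq_neg_iff_add_eq_0)
  obtain j where n: "n = Suc j"
    using cos_eq by (cases n) auto
  have sin_n: "sin (n * \<theta>) = 0"
    using cos_eq sin_cos_squared_add[of "n * \<theta>"] by simp
  have "j * \<theta> = n * \<theta> - \<theta>"
    by (simp add: n algebra_simps)
  then have sin_j: "sin (j * \<theta>) = sin \<theta>"
    by (simp add: sin_diff sin_n cos_eq)
  have "of_real (sin \<theta>) *s (A ^^ n) y = of_real (sin \<theta>) *s (- y)"
    using sin_funpow_quadratic[OF lin y_quadratic[unfolded t], of j] sin_n sin_j
    unfolding n by simp
  then have A_n_y: "(A ^^ n) y = - y"
    using sin_ne by (subst (asm) vector_mul_lcancel) simp
  have "A (P x) = P x"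
    unfolding P_def by (rule fixes_quadratic)
  then have A_n_P: "(A ^^ n) (P x) = P x"
    by (rule funpow_fixed_point)
  have "(A ^^ n) x = (A ^^ n) ((1 / (2 - t)) *s P x + y)"
    by (simp add: y_def)
  also have "\<dots> = (1 / (2 - t)) *s P x - y"
    using vec_linear_funpow[OF lin, of n]
    by (simp add: vec.linear_add vec.linear_scale A_n_y A_n_P)
  also have "\<dots> = (2 / (2 - t)) *s P x - x"
    by (simp add: y_def vec_eq_iff field_simps)
  finally show ?thesis
    unfolding P_def .
qed

definition half_turn :: "'a::field^'n \<Rightarrow> ('a^'n \<Rightarrow> 'a^'n) \<Rightarrow> bool" where
  "half_turn u f \<longleftrightarrow> Vector_Spaces.linear (*s) (*s) f \<and> f u = u \<and> (\<forall>x. \<exists>c. f x = c *s u - x)"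

lemma half_turnI:
  fixes f :: "'a::field_char_0^'n \<Rightarrow> 'a^'n"
  assumes lin: "Vector_Spaces.linear (*s) (*s) f"
    and f: "\<And>x. f x = c x *s v - x" and fixes_u: "f u = u" and "u \<noteq> 0"
  shows "half_turn u f"
proof -
  have "c u *s v = 2 *s u"
    using f[of u] fixes_u by (simp add: vec_eq_iff)
  moreover from this have "c u \<noteq> 0"
    using \<open>u \<noteq> 0\<close> by auto
  ultimately have "v = (2 / c u) *s u"
    by (metis (no_types, lifting) divide_inverse mult.commute vector_smult_assoc vector_smult_lid
        field_class.field_inverse)
  then have "f x = (c x * (2 / c u)) *s u - x" for x
    by (simp add: f vector_smult_assoc)
  then show ?thesis
    using lin fixes_u unfolding half_turn_def by blast
qed

lemma half_turn_compose3:
  assumes "half_turn u f" and "half_turn u g" and "half_turn u h"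
  shows "half_turn u (f \<circ> g \<circ> h)"
proof -
  have "\<exists>c. f (g (h x)) = c *s u - x" for x
  proof -
    obtain a b c where f: "f (g (h x)) = a *s u - g (h x)" and g: "g (h x) = b *s u - h x"
      and h: "h x = c *s u - x"
      using assms unfolding half_turn_def by meson
    have "f (g (h x)) = (a - b + c) *s u - x"
      by (subst f, subst g, subst h) (simp add: vec_eq_iff algebra_simps)
    then show ?thesis ..
  qed
  then show ?thesis
    using assms Vector_Spaces.linear_compose[of "(*s)" "(*s)" h "(*s)" g]
      Vector_Spaces.linear_compose[of "(*s)" "(*s)" "g \<circ> h" "(*s)" f]
    unfolding half_turn_def by (simp add: o_assoc)
qed

lemma half_turn_involution:
  assumes "half_turn u f"
  shows "f \<circ> f = id"
proof
  fix x
  obtain c where c: "f x = c *s u - x" and lin: "Vector_Spaces.linear (*s) (*s) f" and "f u = u"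
    using assms unfolding half_turn_def by blast
  then have "f (f x) = c *s u - f x"
    by (simp add: vec.linear_diff[OF lin] vec.linear_scale[OF lin])
  then show "(f \<circ> f) x = id x"
    by (simp add: c)
qed

lemma funpow_half_turn:
  fixes A :: "'a::real_field^'n \<Rightarrow> 'a^'n" and \<theta> :: real
  assumes lin: "Vector_Spaces.linear (*s) (*s) A"
    and quadratic: "\<And>x. A (A x) - t *s A x + x = c x *s v" and fixes_v: "A v = v"
    and fixes_u: "A u = u" and "u \<noteq> 0"
    and "t = of_real (2 * cos \<theta>)" and "sin \<theta> \<noteq> 0" and "cos (n * \<theta>) = -1"
  shows "half_turn u (A ^^ n)"
proof (rule half_turnI)
  show "Vector_Spaces.linear (*s) (*s) (A ^^ n)"
    using lin by (rule vec_linear_funpow)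
  have "A (A (A x) - t *s A x + x) = A (A x) - t *s A x + x" for x
    by (simp add: quadratic vec.linear_scale[OF lin] fixes_v)
  from funpow_half_period[OF lin this assms(6-8)]
  show "(A ^^ n) x = (2 / (2 - t) * c x) *s v - x" for x
    by (simp add: quadratic vector_smult_assoc)
  show "(A ^^ n) u = u"
    using fixes_u by (rule funpow_fixed_point)
qed (fact \<open>u \<noteq> 0\<close>)

lemma vec3_eq_iff: "(x::'a^3) = y \<longleftrightarrow> x$1 = y$1 \<and> x$2 = y$2 \<and> x$3 = y$3"
  by (simp add: vec_eq_iff forall_3)

lemma refl_s1_nth [simp]:
  "refl_s1 a b x $ 1 = a * x$2 + b * x$3 - x$1" "refl_s1 a b x $ 2 = x$2" "refl_s1 a b x $ 3 = x$3"
  by (simp_all add: refl_s1_def axis_def)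

lemma refl_s2_nth [simp]:
  "refl_s2 l x $ 1 = x$1" "refl_s2 l x $ 2 = x$1 + l * x$3 - x$2" "refl_s2 l x $ 3 = x$3"
  by (simp_all add: refl_s2_def axis_def)

lemma refl_s3_nth [simp]:
  "refl_s3 m x $ 1 = x$1" "refl_s3 m x $ 2 = x$2" "refl_s3 m x $ 3 = x$1 + m * x$2 - x$3"
  by (simp_all add: refl_s3_def axis_def)

lemma linear_refl_s1: "Vector_Spaces.linear (*s) (*s) (refl_s1 a b)"
  and linear_refl_s2: "Vector_Spaces.linear (*s) (*s) (refl_s2 l)"
  and linear_refl_s3: "Vector_Spaces.linear (*s) (*s) (refl_s3 m)"
  by (simp_all add: Vector_Spaces.linear_iff vec.vector_space_axioms vec3_eq_iff algebra_simps)

lemma refl_s1_s2_quadratic: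
  fixes a b l :: complex
  defines "A \<equiv> refl_s1 a b \<circ> refl_s2 l" and "v \<equiv> vector [a*l + 2*b, b + 2*l, 4 - a]"
  shows "A (A x) - (a - 2) *s A x + x = x$3 *s v" and "A v = v"
  by (simp_all add: A_def v_def vec3_eq_iff algebra_simps)

lemma refl_s1_s3_quadratic:
  fixes a b m :: complex
  defines "A \<equiv> refl_s1 a b \<circ> refl_s3 m" and "v \<equiv> vector [2*a + b*m, 4 - b, 2*m + a]"
  shows "A (A x) - (b - 2) *s A x + x = x$2 *s v" and "A v = v"
  by (simp_all add: A_def v_def vec3_eq_iff algebra_simps)

lemma refl_s2_s3_quadratic:
  fixes l m :: complex
  defines "A \<equiv> refl_s2 l \<circ> refl_s3 m" and "v \<equiv> vector [4 - l*m, l + 2, m + 2]"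
  shows "A (A x) - (l*m - 2) *s A x + x = x$1 *s v" and "A v = v"
  by (simp_all add: A_def v_def vec3_eq_iff algebra_simps)

text \<open>u is the first column of the adjugate of the Cartan matrix of R, whose determinant is Delta.\<close>

lemma refl_common_fixed_vector:
  fixes a b l m :: complex
  defines "u \<equiv> vector [4 - l*m, l + 2, m + 2]"
  assumes "refl_Delta a b (l*m) l m = 0"
  shows "refl_s1 a b u = u" and "refl_s2 l u = u" and "refl_s3 m u = u"
  using assms by (simp_all add: vec3_eq_iff refl_Delta_def algebra_simps)

theorem corollary3:
  fixes p q r p1 q1 r1 :: nat and k1 k2 k3 :: int and l m :: complex
  assumes "p \<ge> 3" and "q \<ge> 3" and "r \<ge> 3"
    and "p = 2 * p1" and "q = 2 * q1" and "r = 2 * r1"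
    and "gcd k1 (int p) = 1" and "gcd k2 (int q) = 1" and "gcd k3 (int r) = 1"
    and "\<alpha> = complex_of_real (4 * (cos (pi * real_of_int k1 / real p))\<^sup>2)"
    and "\<beta> = complex_of_real (4 * (cos (pi * real_of_int k2 / real q))\<^sup>2)"
    and "\<gamma> = complex_of_real (4 * (cos (pi * real_of_int k3 / real r))\<^sup>2)"
    and "l * m = \<gamma>"
    and "refl_Delta \<alpha> \<beta> \<gamma> l m = 0"
  shows "(let s1 = refl_s1 \<alpha> \<beta>; s2 = refl_s2 l; s3 = refl_s3 m;
              w = ((s1 \<circ> s3) ^^ q1) \<circ> ((s1 \<circ> s2) ^^ p1) \<circ> ((s2 \<circ> s3) ^^ r1)
          in w \<circ> w = id)"
proof -
  have "p1 \<ge> 2" "q1 \<ge> 2" "r1 \<ge> 2"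
    using assms(1-6) by simp_all
  obtain \<theta>1 :: real where \<theta>1: "\<alpha> - 2 = of_real (2 * cos \<theta>1)" "sin \<theta>1 \<noteq> 0" "cos (p1 * \<theta>1) = -1"
    using assms(7,10) unfolding assms(4) by (rule rotation_angle_of_parameter[OF \<open>p1 \<ge> 2\<close>])
  obtain \<theta>2 :: real where \<theta>2: "\<beta> - 2 = of_real (2 * cos \<theta>2)" "sin \<theta>2 \<noteq> 0" "cos (q1 * \<theta>2) = -1"
    using assms(8,11) unfolding assms(5) by (rule rotation_angle_of_parameter[OF \<open>q1 \<ge> 2\<close>])
  obtain \<theta>3 :: real where \<theta>3: "l * m - 2 = of_real (2 * cos \<theta>3)" "sin \<theta>3 \<noteq> 0" "cos (r1 * \<theta>3) = -1"
    using assms(9,12) unfolding assms(6) assms(13)[symmetric]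
    by (rule rotation_angle_of_parameter[OF \<open>r1 \<ge> 2\<close>])
  define u :: "complex^3" where "u = vector [4 - l*m, l + 2, m + 2]"
  have "u \<noteq> 0"
    using of_real_two_cos_neq_two[OF \<theta>3(2), where 'a=complex] \<theta>3(1)
    by (auto simp: u_def vec3_eq_iff)
  have fixes_u: "refl_s1 \<alpha> \<beta> u = u" "refl_s2 l u = u" "refl_s3 m u = u"
    using refl_common_fixed_vector[of \<alpha> \<beta> l m] assms(13,14) by (simp_all add: u_def)
  have "half_turn u ((refl_s1 \<alpha> \<beta> \<circ> refl_s3 m) ^^ q1)"
    by (rule funpow_half_turn[OF Vector_Spaces.linear_compose[OF linear_refl_s3 linear_refl_s1]
          refl_s1_s3_quadratic _ \<open>u \<noteq> 0\<close> \<theta>2])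
      (simp_all add: fixes_u)
  moreover have "half_turn u ((refl_s1 \<alpha> \<beta> \<circ> refl_s2 l) ^^ p1)"
    by (rule funpow_half_turn[OF Vector_Spaces.linear_compose[OF linear_refl_s2 linear_refl_s1]
          refl_s1_s2_quadratic _ \<open>u \<noteq> 0\<close> \<theta>1])
      (simp_all add: fixes_u)
  moreover have "half_turn u ((refl_s2 l \<circ> refl_s3 m) ^^ r1)"
    by (rule funpow_half_turn[OF Vector_Spaces.linear_compose[OF linear_refl_s3 linear_refl_s2]
          refl_s2_s3_quadratic _ \<open>u \<noteq> 0\<close> \<theta>3])
      (simp_all add: fixes_u)
  ultimately show ?thesis
    unfolding Let_def by (intro half_turn_involution half_turn_compose3)
qed

end
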